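(* Let $\Omega\subset\mathbb{R}^d$ be a bounded connected open set with smooth boundary and $\mathbf{B}\in C^0(\overline\Omega,\mathbb{R}^{n\times d\times n})$. Then the integer $\dim E^x_{\mathbf{B}}\in\{0,\dots,n\}$ does not depend on $x\in\Omega$: $\dim E^{x_1}_{\mathbf{B}}=\dim E^{x_2}_{\mathbf{B}}$ for all $x_1,x_2\in\Omega$.
   Context: $\Gamma(x,y)=\{\boldsymbol\gamma\in C^1([0,1],\Omega):\boldsymbol\gamma(0)=x,\boldsymbol\gamma(1)=y\}$. For $\boldsymbol\gamma\in\Gamma(x,y)$, $R^{\boldsymbol\gamma}_{\mathbf{B}}(\mathbf{v})=\boldsymbol\varphi_{\mathbf{v}}(1)$ where $\boldsymbol\varphi_{\mathbf{v}}$ solves $\varphi_i'(t)=-\sum_{j,k}\mathbf{B}_{ijk}(\boldsymbol\gamma(t))\varphi_k(t)\gamma_j'(t)$ on $[0,1]$, $\boldsymbol\varphi(0)=\mathbf{v}$. $E^x_{\mathbf{B}}=\{\mathbf{v}\in\mathbb{R}^n:\forall y\in\Omega,\ \forall\boldsymbol\gamma_1,\boldsymbol\gamma_2\in\Gamma(x,y),\ R^{\boldsymbol\gamma_1}_{\mathbf{B}}(\mathbf{v})=R^{\boldsymbol\gamma_2}_{\mathbf{B}}(\mathbf{v})\}$, a linear subspace of $\mathbb{R}^n$. *)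

theory Defs
  imports "HOL-Analysis.Analysis"
begin

fun Ck_on :: "nat \<Rightarrow> (real^'d) set \<Rightarrow> (real^'d \<Rightarrow> real) \<Rightarrow> bool" where
  "Ck_on 0 U f = continuous_on U f"
| "Ck_on (Suc k) U f = (f differentiable_on U \<and>
      (\<forall>i. Ck_on k U (\<lambda>x. frechet_derivative f (at x) (axis i 1))))"

definition smooth_on :: "(real^'d) set \<Rightarrow> (real^'d \<Rightarrow> real) \<Rightarrow> bool" where
  "smooth_on U f \<longleftrightarrow> (\<forall>k. Ck_on k U f)"

definition smooth_boundary :: "(real^'d) set \<Rightarrow> bool" where
  "smooth_boundary \<Omega> \<longleftrightarrow>
     (\<forall>p\<in>frontier \<Omega>. \<exists>U \<rho>. open U \<and> p \<in> U \<and> smooth_on U \<rho> \<and>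
        (\<forall>x\<in>U. frechet_derivative \<rho> (at x) \<noteq> (\<lambda>_. 0)) \<and>
        \<Omega> \<inter> U = {x\<in>U. \<rho> x < 0})"

definition paths_C1 :: "(real^'d) set \<Rightarrow> real^'d \<Rightarrow> real^'d \<Rightarrow> (real \<Rightarrow> real^'d) set" where
  "paths_C1 \<Omega> x y = {\<gamma>. (\<exists>\<gamma>'. continuous_on {0..1} \<gamma>' \<and>
        (\<forall>t\<in>{0..1}. (\<gamma> has_vector_derivative \<gamma>' t) (at t within {0..1})))
      \<and> \<gamma> ` {0..1} \<subseteq> \<Omega> \<and> \<gamma> 0 = x \<and> \<gamma> 1 = y}"

text \<open>B x $ i $ j $ k is the tensor entry B_ijk(x). phi solves the transport ODE
  phi_i' = - sum_{j,k} B_ijk(gamma) phi_k gamma_j'.\<close>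
definition transport_ode ::
  "(real^'d \<Rightarrow> real^'n^'d^'n) \<Rightarrow> (real \<Rightarrow> real^'d) \<Rightarrow> real^'n \<Rightarrow> (real \<Rightarrow> real^'n) \<Rightarrow> bool" where
  "transport_ode B \<gamma> v \<phi> \<longleftrightarrow> \<phi> 0 = v \<and>
     (\<forall>t\<in>{0..1}. (\<phi> has_vector_derivative
        (\<chi> i. - (\<Sum>j\<in>UNIV. \<Sum>k\<in>UNIV. B (\<gamma> t) $ i $ j $ k * \<phi> t $ k *
               vector_derivative \<gamma> (at t within {0..1}) $ j))) (at t within {0..1}))"

definition transport :: "(real^'d \<Rightarrow> real^'n^'d^'n) \<Rightarrow> (real \<Rightarrow> real^'d) \<Rightarrow> real^'n \<Rightarrow> real^'n" where
  "transport B \<gamma> v = (THE w. \<exists>\<phi>. transport_ode B \<gamma> v \<phi> \<and> w = \<phi> 1)"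

definition E_B :: "(real^'d) set \<Rightarrow> (real^'d \<Rightarrow> real^'n^'d^'n) \<Rightarrow> real^'d \<Rightarrow> (real^'n) set" where
  "E_B \<Omega> B x = {v. \<forall>y\<in>\<Omega>. \<forall>\<gamma>1\<in>paths_C1 \<Omega> x y. \<forall>\<gamma>2\<in>paths_C1 \<Omega> x y.
       transport B \<gamma>1 v = transport B \<gamma>2 v}"

end

theory Submission
  imports Defs
begin

text \<open>Transport along a \<open>C\<^sup>1\<close> path is the time-one map of a linear ODE with continuous
  coefficients; by Picard iteration and Gronwall's inequality it is a well-defined linear
  injection. Transport along \<open>\<sigma>\<close> from \<open>x\<close> to \<open>y\<close>, followed by transport along any path from
  \<open>y\<close>, is transport along the concatenated path, so \<open>\<sigma>\<close> maps \<open>E\<^sup>x\<close> injectively into \<open>E\<^sup>y\<close>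
  and \<open>dim E\<^sup>x \<le> dim E\<^sup>y\<close>. Straight segments give this in both directions between nearby
  points, so the dimension is locally constant and hence constant on the connected set \<open>\<Omega>\<close>.\<close>

section \<open>Linear ODEs with continuous coefficients on [0, 1]\<close>

definition solves_linear_ode :: "(real \<Rightarrow> real^'n^'n) \<Rightarrow> (real \<Rightarrow> real^'n) \<Rightarrow> bool" where
  "solves_linear_ode A \<phi> \<longleftrightarrow>
     (\<forall>t\<in>{0..1}. (\<phi> has_vector_derivative A t *v \<phi> t) (at t within {0..1}))"

lemma solves_linear_ode_add:
  "solves_linear_ode A \<phi> \<Longrightarrow> solves_linear_ode A \<psi> \<Longrightarrow> solves_linear_ode A (\<lambda>t. \<phi> t + \<psi> t)"
  unfolding solves_linear_ode_def by (auto intro: has_vector_derivative_add simp: matrix_vector_right_distrib)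

lemma solves_linear_ode_diff:
  "solves_linear_ode A \<phi> \<Longrightarrow> solves_linear_ode A \<psi> \<Longrightarrow> solves_linear_ode A (\<lambda>t. \<phi> t - \<psi> t)"
  unfolding solves_linear_ode_def
  by (auto intro: has_vector_derivative_diff simp: matrix_vector_mult_diff_distrib)

lemma solves_linear_ode_scaleR:
  "solves_linear_ode A \<phi> \<Longrightarrow> solves_linear_ode A (\<lambda>t. r *\<^sub>R \<phi> t)"
  unfolding solves_linear_ode_def
  by (simp add: matrix_vector_mult_scaleR
      bounded_linear.has_vector_derivative[OF bounded_linear_scaleR_right])

lemma continuous_on_matrix_vector_mult:
  fixes A :: "'a::topological_space \<Rightarrow> real^'n^'m"
  assumes "continuous_on S A" "continuous_on S x"
  shows "continuous_on S (\<lambda>s. A s *v x s)"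
  unfolding matrix_vector_mult_def
  by (intro continuous_on_vec_lambda continuous_on_sum continuous_on_mult
      continuous_on_component assms)

lemma compact_matrix_vector_mult_bound:
  fixes A :: "'a::topological_space \<Rightarrow> real^'n^'m"
  assumes "compact S" "continuous_on S A"
  obtains M where "M \<ge> 0" "\<And>t x. t \<in> S \<Longrightarrow> norm (A t *v x) \<le> M * norm x"
proof -
  let ?g = "\<lambda>t. \<Sum>i\<in>UNIV. \<Sum>j\<in>UNIV. \<bar>A t $ i $ j\<bar>"
  have "continuous_on S ?g"
    by (intro continuous_on_sum continuous_on_rabs continuous_on_component assms(2))
  then have "compact (?g ` S)"
    using assms(1) by (rule compact_continuous_image)
  then obtain K where K: "\<forall>y\<in>?g ` S. norm y \<le> K"
    using compact_imp_bounded bounded_iff by metis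
  show ?thesis
  proof (rule that[of "max K 0"])
    fix t x assume "t \<in> S"
    have "norm (A t *v x) \<le> onorm ((*v) (A t)) * norm x"
      by (rule onorm[OF matrix_vector_mul_bounded_linear])
    also have "\<dots> \<le> ?g t * norm x"
      by (rule mult_right_mono[OF onorm_le_matrix_component_sum]) simp
    also have "\<dots> \<le> max K 0 * norm x"
      using K \<open>t \<in> S\<close> by (intro mult_right_mono) force+
    finally show "norm (A t *v x) \<le> max K 0 * norm x" .
  qed simp
qed

text \<open>Gronwall: \<open>exp (- L t) f t\<close> decreases to the right of \<open>t\<^sub>0\<close> and \<open>exp (L t) f t\<close> increases
  to its left.\<close>
lemma gronwall_vanishing:
  fixes f :: "real \<Rightarrow> real"
  assumes deriv: "\<And>t. t \<in> {a..b} \<Longrightarrow> (f has_real_derivative f' t) (at t within {a..b})"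
    and bound: "\<And>t. t \<in> {a..b} \<Longrightarrow> \<bar>f' t\<bar> \<le> L * f t"
    and nonneg: "\<And>t. t \<in> {a..b} \<Longrightarrow> 0 \<le> f t"
    and zero: "t\<^sub>0 \<in> {a..b}" "f t\<^sub>0 = 0"
    and t: "t \<in> {a..b}"
  shows "f t = 0"
proof -
  have cont: "continuous_on {a..b} f"
    unfolding continuous_on_eq_continuous_within using deriv DERIV_continuous by blast
  have deriv_at: "(f has_real_derivative f' s) (at s)" if "a < s" "s < b" for s
    using deriv[of s] that by (simp add: at_within_Icc_at)
  have "f t \<le> 0"
  proof (cases "t\<^sub>0 \<le> t")
    case True
    let ?g = "\<lambda>s. exp (- L * s) * f s"
    have "?g t \<le> ?g t\<^sub>0"
    proof (rule DERIV_nonpos_imp_decreasing_open[of t\<^sub>0 t ?g, OF True])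
      fix s assume s: "t\<^sub>0 < s" "s < t"
      then have "(?g has_real_derivative exp (- L * s) * (f' s - L * f s)) (at s)"
        using zero t deriv_at[of s]
        by (auto intro!: derivative_eq_intros simp: algebra_simps)
      moreover have "exp (- L * s) * (f' s - L * f s) \<le> 0"
        using bound[of s] s zero t by (intro mult_nonneg_nonpos) auto
      ultimately show "\<exists>y. (?g has_real_derivative y) (at s) \<and> y \<le> 0" by blast
    qed (use cont zero t in \<open>auto intro!: continuous_intros elim: continuous_on_subset\<close>)
    then show ?thesis using zero by (simp add: mult_le_0_iff)
  next
    case False
    let ?g = "\<lambda>s. exp (L * s) * f s"
    have "?g t \<le> ?g t\<^sub>0"
    proof (rule DERIV_nonneg_imp_increasing_open[of t t\<^sub>0 ?g])
      fix s assume s: "t < s" "s < t\<^sub>0"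
      then have "(?g has_real_derivative exp (L * s) * (f' s + L * f s)) (at s)"
        using zero t deriv_at[of s]
        by (auto intro!: derivative_eq_intros simp: algebra_simps)
      moreover have "0 \<le> exp (L * s) * (f' s + L * f s)"
        using bound[of s] s zero t by (intro mult_nonneg_nonneg) auto
      ultimately show "\<exists>y. (?g has_real_derivative y) (at s) \<and> 0 \<le> y" by blast
    qed (use False cont zero t in \<open>auto intro!: continuous_intros elim: continuous_on_subset\<close>)
    then show ?thesis using zero by (simp add: mult_le_0_iff)
  qed
  then show ?thesis using nonneg[OF t] by linarith
qed

lemma solves_linear_ode_eq_0:
  assumes A: "continuous_on {0..1} A" and sol: "solves_linear_ode A \<phi>"
    and zero: "t\<^sub>0 \<in> {0..1}" "\<phi> t\<^sub>0 = 0" and t: "t \<in> {0..1}"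
  shows "\<phi> t = 0"
proof -
  obtain M where M: "M \<ge> 0" "\<And>t x. t \<in> {0..1} \<Longrightarrow> norm (A t *v x) \<le> M * norm x"
    using compact_matrix_vector_mult_bound[OF compact_Icc A] by blast
  let ?f' = "\<lambda>t. 2 * (\<phi> t \<bullet> (A t *v \<phi> t))"
  have "((\<lambda>t. \<phi> t \<bullet> \<phi> t) has_real_derivative ?f' t) (at t within {0..1})" if "t \<in> {0..1}" for t
  proof -
    have "(\<phi> has_derivative (\<lambda>h. h *\<^sub>R (A t *v \<phi> t))) (at t within {0..1})"
      using sol that by (simp add: solves_linear_ode_def has_vector_derivative_def)
    from has_derivative_inner[OF this this] show ?thesis
      unfolding has_field_derivative_def
      by (rule has_derivative_eq_rhs) (auto simp: fun_eq_iff inner_commute algebra_simps)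
  qed
  moreover have "\<bar>?f' t\<bar> \<le> 2 * M * (\<phi> t \<bullet> \<phi> t)" if "t \<in> {0..1}" for t
  proof -
    have "\<bar>?f' t\<bar> \<le> 2 * (norm (\<phi> t) * norm (A t *v \<phi> t))"
      using Cauchy_Schwarz_ineq2[of "\<phi> t" "A t *v \<phi> t"] by simp
    also have "\<dots> \<le> 2 * (norm (\<phi> t) * (M * norm (\<phi> t)))"
      using M that by (simp add: mult_left_mono)
    also have "\<dots> = 2 * M * (\<phi> t \<bullet> \<phi> t)"
      by (simp add: power2_norm_eq_inner[symmetric] power2_eq_square)
    finally show ?thesis .
  qed
  ultimately have "\<phi> t \<bullet> \<phi> t = 0"
    by (rule gronwall_vanishing[of 0 1 _ ?f' "2 * M" t\<^sub>0]) (use zero t in auto)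
  then show ?thesis by simp
qed

primrec picard_iterate :: "(real \<Rightarrow> real^'n^'n) \<Rightarrow> real^'n \<Rightarrow> nat \<Rightarrow> real \<Rightarrow> real^'n" where
  "picard_iterate A v 0 = (\<lambda>t. v)"
| "picard_iterate A v (Suc k) = (\<lambda>t. v + integral {0..t} (\<lambda>s. A s *v picard_iterate A v k s))"

lemma continuous_on_picard_iterate:
  assumes "continuous_on {0..1} A"
  shows "continuous_on {0..1} (picard_iterate A v k)"
proof (induction k)
  case (Suc k)
  have "continuous_on {0..1} (\<lambda>t. integral {0..t} (\<lambda>s. A s *v picard_iterate A v k s))"
    by (intro indefinite_integral_continuous_1 integrable_continuous_interval
        continuous_on_matrix_vector_mult assms Suc)
  then show ?case by (simp add: continuous_on_add)
qed simp

lemma has_integral_power_div_fact: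
  fixes M t :: real
  assumes "0 \<le> t"
  shows "((\<lambda>s. M * ((M * s) ^ k / fact k)) has_integral (M * t) ^ Suc k / fact (Suc k)) {0..t}"
proof -
  have "((\<lambda>s. M * ((M * s) ^ k / fact k)) has_integral
      (\<lambda>s. (M * s) ^ Suc k / fact (Suc k)) t - (\<lambda>s. (M * s) ^ Suc k / fact (Suc k)) 0) {0..t}"
  proof (rule fundamental_theorem_of_calculus[OF assms])
    fix s
    have "((\<lambda>s. (M * s) ^ Suc k / fact (Suc k)) has_real_derivative
         real (Suc k) * (M * s) ^ k * M / fact (Suc k)) (at s within {0..t})"
      by (auto intro!: derivative_eq_intros simp del: power_Suc fact_Suc)
    moreover have "real (Suc k) * (M * s) ^ k * M / fact (Suc k) = M * ((M * s) ^ k / fact k)"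
      by (simp add: field_simps del: of_nat_Suc)
    ultimately show "((\<lambda>s. (M * s) ^ Suc k / fact (Suc k)) has_vector_derivative
           M * ((M * s) ^ k / fact k)) (at s within {0..t})"
      by (simp add: has_real_derivative_iff_has_vector_derivative del: power_Suc fact_Suc)
  qed
  then show ?thesis by simp
qed

lemma norm_integral_matrix_vector_mult_le:
  fixes A :: "real \<Rightarrow> real^'n^'m"
  assumes A: "continuous_on {0..1} A"
    and M: "M \<ge> 0" "\<And>s x. s \<in> {0..1} \<Longrightarrow> norm (A s *v x) \<le> M * norm x"
    and x: "continuous_on {0..1} x" "\<And>s. s \<in> {0..t} \<Longrightarrow> norm (x s) \<le> C * ((M * s) ^ k / fact k)"
    and t: "t \<in> {0..1}"
  shows "norm (integral {0..t} (\<lambda>s. A s *v x s)) \<le> C * ((M * t) ^ Suc k / fact (Suc k))"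
proof -
  have int: "((\<lambda>s. C * (M * ((M * s) ^ k / fact k))) has_integral
      C * ((M * t) ^ Suc k / fact (Suc k))) {0..t}"
    using t by (intro has_integral_mult_right has_integral_power_div_fact) auto
  have "norm (integral {0..t} (\<lambda>s. A s *v x s)) \<le> integral {0..t} (\<lambda>s. C * (M * ((M * s) ^ k / fact k)))"
  proof (rule Henstock_Kurzweil_Integration.integral_norm_bound_integral)
    show "(\<lambda>s. A s *v x s) integrable_on {0..t}"
      using t by (intro integrable_continuous_interval continuous_on_matrix_vector_mult
          continuous_on_subset[OF A] continuous_on_subset[OF x(1)]) auto
    show "(\<lambda>s. C * (M * ((M * s) ^ k / fact k))) integrable_on {0..t}"
      using int by (rule has_integral_integrable)
  next
    fix s assume s: "s \<in> {0..t}"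
    then have "norm (A s *v x s) \<le> M * norm (x s)" using M t by auto
    also have "\<dots> \<le> M * (C * ((M * s) ^ k / fact k))"
      using x(2)[OF s] M(1) by (rule mult_left_mono)
    finally show "norm (A s *v x s) \<le> C * (M * ((M * s) ^ k / fact k))" by (simp add: ac_simps)
  qed
  also have "\<dots> = C * ((M * t) ^ Suc k / fact (Suc k))"
    using int by (rule integral_unique)
  finally show ?thesis .
qed

lemma norm_picard_iterate_diff_le:
  assumes A: "continuous_on {0..1} A"
    and M: "M \<ge> 0" "\<And>s x. s \<in> {0..1} \<Longrightarrow> norm (A s *v x) \<le> M * norm x"
  shows "t \<in> {0..1} \<Longrightarrow>
    norm (picard_iterate A v (Suc k) t - picard_iterate A v k t) \<le> norm v * ((M * t) ^ Suc k / fact (Suc k))"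
proof (induction k arbitrary: t)
  case 0
  then show ?case
    by (simp add: norm_integral_matrix_vector_mult_le[OF A M, of "\<lambda>_. v" t "norm v" 0, simplified])
next
  case (Suc k)
  let ?d = "\<lambda>s. picard_iterate A v (Suc k) s - picard_iterate A v k s"
  have "picard_iterate A v (Suc (Suc k)) t - picard_iterate A v (Suc k) t
      = integral {0..t} (\<lambda>s. A s *v picard_iterate A v (Suc k) s)
        - integral {0..t} (\<lambda>s. A s *v picard_iterate A v k s)"
    by simp
  also have "\<dots> = integral {0..t} (\<lambda>s. A s *v ?d s)"
  proof -
    have int: "(\<lambda>s. A s *v picard_iterate A v j s) integrable_on {0..t}" for j
      using Suc.prems by (intro integrable_continuous_interval continuous_on_matrix_vector_mult
          continuous_on_subset[OF A] continuous_on_subset[OF continuous_on_picard_iterate[OF A]]) auto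
    show ?thesis
      unfolding matrix_vector_mult_diff_distrib
      by (rule Henstock_Kurzweil_Integration.integral_diff[OF int int, symmetric])
  qed
  also have "norm \<dots> \<le> norm v * ((M * t) ^ Suc (Suc k) / fact (Suc (Suc k)))"
    using Suc by (intro norm_integral_matrix_vector_mult_le[OF A M] continuous_on_diff
        continuous_on_picard_iterate[OF A]) auto
  finally show ?case .
qed

lemma picard_iterate_uniform_limit:
  assumes A: "continuous_on {0..1} A"
  obtains \<phi> where "uniform_limit {0..1} (picard_iterate A v) \<phi> sequentially"
proof -
  obtain M where M: "M \<ge> 0" "\<And>s x. s \<in> {0..1} \<Longrightarrow> norm (A s *v x) \<le> M * norm x"
    using compact_matrix_vector_mult_bound[OF compact_Icc A] by blast
  define d where "d k t = picard_iterate A v (Suc k) t - picard_iterate A v k t" for k t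
  define b where "b k = norm v * (M * (inverse (fact k) * M ^ k))" for k
  have "norm (d k t) \<le> b k" if t: "t \<in> {0..1}" for k t
  proof -
    have "norm (d k t) \<le> norm v * ((M * t) ^ Suc k / fact (Suc k))"
      using norm_picard_iterate_diff_le[OF A M t] by (simp add: d_def)
    also have "\<dots> \<le> norm v * (M ^ Suc k / fact k)"
      using t M by (intro mult_left_mono frac_le power_mono fact_mono) (auto simp: mult_left_le)
    also have "\<dots> = b k" by (simp add: b_def field_simps)
    finally show ?thesis .
  qed
  moreover have "summable b"
    unfolding b_def by (intro summable_mult summable_exp)
  ultimately have "uniform_limit {0..1} (\<lambda>n t. \<Sum>k<n. d k t) (\<lambda>t. \<Sum>k. d k t) sequentially"
    by (rule Weierstrass_m_test)
  moreover have "picard_iterate A v n t = v + (\<Sum>k<n. d k t)" for n t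
    unfolding d_def by (subst sum_lessThan_telescope) simp
  ultimately have "uniform_limit {0..1} (picard_iterate A v) (\<lambda>t. v + (\<Sum>k. d k t)) sequentially"
    by (simp add: uniform_limit_iff dist_add_cancel)
  then show ?thesis by (rule that)
qed

lemma uniform_limit_matrix_vector_mult:
  fixes A :: "'a \<Rightarrow> real^'n^'m"
  assumes lim: "uniform_limit S f g F"
    and M: "M \<ge> 0" "\<And>s x. s \<in> S \<Longrightarrow> norm (A s *v x) \<le> M * norm x"
  shows "uniform_limit S (\<lambda>n s. A s *v f n s) (\<lambda>s. A s *v g s) F"
  unfolding uniform_limit_iff
proof (intro allI impI)
  fix e :: real assume "e > 0"
  with M have "e / (M + 1) > 0" by simp
  with lim have "\<forall>\<^sub>F n in F. \<forall>s\<in>S. dist (f n s) (g s) < e / (M + 1)"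
    unfolding uniform_limit_iff by blast
  then show "\<forall>\<^sub>F n in F. \<forall>s\<in>S. dist (A s *v f n s) (A s *v g s) < e"
  proof (rule eventually_mono, intro ballI)
    fix n s assume close: "\<forall>s\<in>S. dist (f n s) (g s) < e / (M + 1)" and s: "s \<in> S"
    have "dist (A s *v f n s) (A s *v g s) \<le> M * dist (f n s) (g s)"
      using M(2)[OF s, of "f n s - g s"] by (simp add: dist_norm matrix_vector_mult_diff_distrib)
    also have "\<dots> \<le> M * (e / (M + 1))"
      using close s M by (intro mult_left_mono) auto
    also have "\<dots> < e"
      using M \<open>e > 0\<close> by (simp add: field_simps)
    finally show "dist (A s *v f n s) (A s *v g s) < e" .
  qed
qed

lemma picard_iterate_limit_integral_equation:
  assumes A: "continuous_on {0..1} A"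
    and lim: "uniform_limit {0..1} (picard_iterate A v) \<phi> sequentially" and t: "t \<in> {0..1}"
  shows "\<phi> t = v + integral {0..t} (\<lambda>s. A s *v \<phi> s)"
proof -
  obtain M where M: "M \<ge> 0" "\<And>s x. s \<in> {0..1} \<Longrightarrow> norm (A s *v x) \<le> M * norm x"
    using compact_matrix_vector_mult_bound[OF compact_Icc A] by blast
  have "uniform_limit {0..t} (\<lambda>n s. A s *v picard_iterate A v n s) (\<lambda>s. A s *v \<phi> s) sequentially"
    using t M by (intro uniform_limit_matrix_vector_mult uniform_limit_on_subset[OF lim]) auto
  moreover have "continuous_on {0..t} (\<lambda>s. A s *v picard_iterate A v n s)" for n
    using t by (intro continuous_on_matrix_vector_mult continuous_on_subset[OF A]
        continuous_on_subset[OF continuous_on_picard_iterate[OF A]]) auto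
  ultimately obtain I J
    where I: "\<And>n. ((\<lambda>s. A s *v picard_iterate A v n s) has_integral I n) {0..t}"
      and J: "((\<lambda>s. A s *v \<phi> s) has_integral J) {0..t}" and "I \<longlonglongrightarrow> J"
    by (rule uniform_limit_integral) auto
  then have "(\<lambda>n. picard_iterate A v (Suc n) t) \<longlonglongrightarrow> v + J"
    by (simp add: integral_unique[OF I] tendsto_add_const_iff)
  moreover have "(\<lambda>n. picard_iterate A v (Suc n) t) \<longlonglongrightarrow> \<phi> t"
    using tendsto_uniform_limitI[OF lim t] by (rule LIMSEQ_Suc)
  ultimately have "\<phi> t = v + J"
    by (rule LIMSEQ_unique[rotated])
  then show ?thesis
    using J by (simp add: integral_unique)
qed

lemma linear_ode_exists:
  assumes A: "continuous_on {0..1} A"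
  obtains \<phi> where "\<phi> 0 = v" "solves_linear_ode A \<phi>"
proof -
  obtain \<phi> where lim: "uniform_limit {0..1} (picard_iterate A v) \<phi> sequentially"
    using picard_iterate_uniform_limit[OF A] by blast
  note fixpoint = picard_iterate_limit_integral_equation[OF A lim]
  have cont: "continuous_on {0..1} \<phi>"
    by (rule uniform_limit_theorem[OF _ lim])
      (auto intro!: always_eventually continuous_on_picard_iterate[OF A])
  show ?thesis
  proof
    show "\<phi> 0 = v" using fixpoint[of 0] by simp
    show "solves_linear_ode A \<phi>"
      unfolding solves_linear_ode_def
    proof
      fix t :: real assume t: "t \<in> {0..1}"
      have "((\<lambda>t. v + integral {0..t} (\<lambda>s. A s *v \<phi> s)) has_vector_derivative 0 + A t *v \<phi> t)
          (at t within {0..1})"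
        by (intro has_vector_derivative_add has_vector_derivative_const
            integral_has_vector_derivative continuous_on_matrix_vector_mult A cont t)
      then have deriv: "((\<lambda>t. v + integral {0..t} (\<lambda>s. A s *v \<phi> s)) has_vector_derivative
          A t *v \<phi> t) (at t within {0..1})"
        by simp
      show "(\<phi> has_vector_derivative A t *v \<phi> t) (at t within {0..1})"
        by (rule has_vector_derivative_transform[OF t _ deriv]) (simp add: fixpoint)
    qed
  qed
qed

definition linear_ode_propagator :: "(real \<Rightarrow> real^'n^'n) \<Rightarrow> real^'n \<Rightarrow> real^'n" where
  "linear_ode_propagator A v = (THE w. \<exists>\<phi>. \<phi> 0 = v \<and> solves_linear_ode A \<phi> \<and> w = \<phi> 1)"

lemma linear_ode_propagator_eq:
  fixes A :: "real \<Rightarrow> real^'n^'n"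
  assumes A: "continuous_on {0..1} A" and sol: "\<phi> 0 = v" "solves_linear_ode A \<phi>"
  shows "linear_ode_propagator A v = \<phi> 1"
  unfolding linear_ode_propagator_def
proof (rule the_equality)
  fix w assume "\<exists>\<psi>. \<psi> 0 = v \<and> solves_linear_ode A \<psi> \<and> w = \<psi> 1"
  then obtain \<psi> where \<psi>: "\<psi> 0 = v" "solves_linear_ode A \<psi>" and w: "w = \<psi> 1" by blast
  have "solves_linear_ode A (\<lambda>t. \<psi> t - \<phi> t)"
    using \<psi>(2) sol(2) by (rule solves_linear_ode_diff)
  then have "(\<lambda>t. \<psi> t - \<phi> t) 1 = 0"
    by (rule solves_linear_ode_eq_0[OF A, of _ 0]) (use sol \<psi> in auto)
  then show "w = \<phi> 1" using w by simp
qed (use sol in blast)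

lemma linear_linear_ode_propagator:
  fixes A :: "real \<Rightarrow> real^'n^'n"
  assumes A: "continuous_on {0..1} A"
  shows "linear (linear_ode_propagator A)"
proof
  fix v w :: "real^'n"
  obtain \<phi> where \<phi>: "\<phi> 0 = v" "solves_linear_ode A \<phi>"
    using linear_ode_exists[OF A] by metis
  obtain \<psi> where \<psi>: "\<psi> 0 = w" "solves_linear_ode A \<psi>"
    using linear_ode_exists[OF A] by metis
  show "linear_ode_propagator A (v + w) = linear_ode_propagator A v + linear_ode_propagator A w"
    using linear_ode_propagator_eq[OF A _ solves_linear_ode_add[OF \<phi>(2) \<psi>(2)]]
      linear_ode_propagator_eq[OF A \<phi>] linear_ode_propagator_eq[OF A \<psi>] \<phi>(1) \<psi>(1)
    by simp
next
  fix r :: real and v :: "real^'n"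
  obtain \<phi> where \<phi>: "\<phi> 0 = v" "solves_linear_ode A \<phi>"
    using linear_ode_exists[OF A] by metis
  show "linear_ode_propagator A (r *\<^sub>R v) = r *\<^sub>R linear_ode_propagator A v"
    using linear_ode_propagator_eq[OF A _ solves_linear_ode_scaleR[OF \<phi>(2)]]
      linear_ode_propagator_eq[OF A \<phi>] \<phi>(1)
    by simp
qed

lemma inj_linear_ode_propagator:
  fixes A :: "real \<Rightarrow> real^'n^'n"
  assumes A: "continuous_on {0..1} A"
  shows "inj (linear_ode_propagator A)"
  unfolding linear_inj_iff_eq_0[OF linear_linear_ode_propagator[OF A]]
proof (intro allI impI)
  fix v assume v: "linear_ode_propagator A v = 0"
  obtain \<phi> where \<phi>: "\<phi> 0 = v" "solves_linear_ode A \<phi>"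
    using linear_ode_exists[OF A] by metis
  have "\<phi> 1 = 0"
    using v linear_ode_propagator_eq[OF A \<phi>] by simp
  then show "v = 0"
    using solves_linear_ode_eq_0[OF A \<phi>(2), of 1 0] \<phi>(1) by simp
qed

section \<open>\<open>C\<^sup>1\<close> paths and their smooth concatenation\<close>

abbreviation velocity :: "(real \<Rightarrow> 'a::real_normed_vector) \<Rightarrow> real \<Rightarrow> 'a" where
  "velocity \<gamma> t \<equiv> vector_derivative \<gamma> (at t within {0..1})"

lemma paths_C1_iff:
  "\<gamma> \<in> paths_C1 \<Omega> x y \<longleftrightarrow>
     continuous_on {0..1} (velocity \<gamma>) \<and>
     (\<forall>t\<in>{0..1}. (\<gamma> has_vector_derivative velocity \<gamma> t) (at t within {0..1})) \<and>
     \<gamma> ` {0..1} \<subseteq> \<Omega> \<and> \<gamma> 0 = x \<and> \<gamma> 1 = y"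
proof
  assume "\<gamma> \<in> paths_C1 \<Omega> x y"
  then obtain \<gamma>' where \<gamma>': "continuous_on {0..1} \<gamma>'"
      "\<forall>t\<in>{0..1}. (\<gamma> has_vector_derivative \<gamma>' t) (at t within {0..1})"
    and ends: "\<gamma> ` {0..1} \<subseteq> \<Omega>" "\<gamma> 0 = x" "\<gamma> 1 = y"
    unfolding paths_C1_def by blast
  have velocity: "velocity \<gamma> t = \<gamma>' t" if "t \<in> {0..1}" for t
    using \<gamma>'(2) that by (intro vector_derivative_within_closed_interval) auto
  have "continuous_on {0..1} (velocity \<gamma>)"
    using \<gamma>'(1) by (rule continuous_on_eq) (simp add: velocity)
  with \<gamma>' ends velocity show "continuous_on {0..1} (velocity \<gamma>) \<and>
     (\<forall>t\<in>{0..1}. (\<gamma> has_vector_derivative velocity \<gamma> t) (at t within {0..1})) \<and>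
     \<gamma> ` {0..1} \<subseteq> \<Omega> \<and> \<gamma> 0 = x \<and> \<gamma> 1 = y"
    by simp
qed (auto simp: paths_C1_def)

lemma paths_C1D:
  assumes "\<gamma> \<in> paths_C1 \<Omega> x y"
  shows "continuous_on {0..1} (velocity \<gamma>)"
    and "t \<in> {0..1} \<Longrightarrow> (\<gamma> has_vector_derivative velocity \<gamma> t) (at t within {0..1})"
    and "\<gamma> ` {0..1} \<subseteq> \<Omega>" "\<gamma> 0 = x" "\<gamma> 1 = y"
  using assms unfolding paths_C1_iff by auto

lemma continuous_on_paths_C1:
  "\<gamma> \<in> paths_C1 \<Omega> x y \<Longrightarrow> continuous_on {0..1} \<gamma>"
  unfolding continuous_on_eq_continuous_within
  by (auto dest: paths_C1D(2) intro: has_vector_derivative_continuous)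

lemma linepath_in_paths_C1:
  "closed_segment x y \<subseteq> \<Omega> \<Longrightarrow> linepath x y \<in> paths_C1 \<Omega> x y"
  unfolding paths_C1_def
proof (intro CollectI conjI exI ballI)
  show "continuous_on {0..1} (\<lambda>_. y - x)" by simp
  show "(linepath x y has_vector_derivative y - x) (at t within {0..1})" for t
    by (rule has_vector_derivative_linepath_within)
qed (simp_all add: linepath_image_01 linepath_0' linepath_1')

definition smoothstep :: "real \<Rightarrow> real" where
  "smoothstep s = 3 * s\<^sup>2 - 2 * s ^ 3"

lemma smoothstep_simps [simp]: "smoothstep 0 = 0" "smoothstep 1 = 1"
  by (simp_all add: smoothstep_def)

lemma smoothstep_in_unit_interval: "s \<in> {0..1} \<Longrightarrow> smoothstep s \<in> {0..1}"
proof -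
  assume s: "s \<in> {0..1}"
  have "smoothstep s = s\<^sup>2 * (3 - 2 * s)" "1 - smoothstep s = (1 - s)\<^sup>2 * (1 + 2 * s)"
    by (simp_all add: smoothstep_def algebra_simps power2_eq_square power3_eq_cube)
  moreover have "0 \<le> s\<^sup>2 * (3 - 2 * s)" "0 \<le> (1 - s)\<^sup>2 * (1 + 2 * s)"
    using s by auto
  ultimately show ?thesis by auto
qed

text \<open>Reparametrising both halves by \<^const>\<open>smoothstep\<close> makes the velocity vanish at the
  junction, so the concatenation of two \<open>C\<^sup>1\<close> paths is again \<open>C\<^sup>1\<close>.\<close>
definition smooth_join :: "(real \<Rightarrow> 'a) \<Rightarrow> (real \<Rightarrow> 'a) \<Rightarrow> real \<Rightarrow> 'a" where
  "smooth_join f g t = (if t \<le> 1/2 then f (smoothstep (2 * t)) else g (smoothstep (2 * t - 1)))"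

definition smooth_join_speed :: "real \<Rightarrow> real" where
  "smooth_join_speed t = (if t \<le> 1/2 then 24 * t * (1 - 2 * t) else 24 * (2 * t - 1) * (1 - t))"

lemma smooth_join_simps [simp]: "smooth_join f g 0 = f 0" "smooth_join f g 1 = g 1"
  by (simp_all add: smooth_join_def)

lemma smooth_join_image_subset:
  "smooth_join f g ` {0..1} \<subseteq> f ` {0..1} \<union> g ` {0..1}"
proof (rule image_subsetI)
  fix t :: real assume "t \<in> {0..1}"
  then show "smooth_join f g t \<in> f ` {0..1} \<union> g ` {0..1}"
    using smoothstep_in_unit_interval[of "2 * t"] smoothstep_in_unit_interval[of "2 * t - 1"]
    by (auto simp: smooth_join_def)
qed

lemma has_vector_derivative_reparam_unit_interval:
  assumes f: "\<And>s. s \<in> {0..1} \<Longrightarrow> (f has_vector_derivative f' s) (at s within {0..1})"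
    and q: "(q has_real_derivative q') (at t within S)" and qS: "q ` S \<subseteq> {0..1}" and t: "t \<in> S"
  shows "((\<lambda>t. f (q t)) has_vector_derivative q' *\<^sub>R f' (q t)) (at t within S)"
proof -
  have "(f has_vector_derivative f' (q t)) (at (q t) within q ` S)"
    using f qS t by (intro has_vector_derivative_within_subset[OF _ qS]) auto
  with q show ?thesis
    using vector_diff_chain_within[of q q' t S f]
    by (simp add: has_real_derivative_iff_has_vector_derivative o_def)
qed

lemma has_vector_derivative_join_halves:
  fixes f g :: "real \<Rightarrow> 'a::real_normed_vector"
  assumes f: "\<And>s. s \<in> {0..1/2} \<Longrightarrow> (f has_vector_derivative f' s) (at s within {0..1/2})"
    and g: "\<And>s. s \<in> {1/2..1} \<Longrightarrow> (g has_vector_derivative g' s) (at s within {1/2..1})"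
    and fg: "f (1/2) = g (1/2)" "f' (1/2) = g' (1/2)" and t: "t \<in> {0..1}"
  shows "((\<lambda>t. if t \<le> 1/2 then f t else g t) has_vector_derivative
    (if t \<le> 1/2 then f' t else g' t)) (at t within {0..1})"
proof -
  let ?L = "{0..1/2::real}" and ?R = "{1/2<..1::real}"
  have closures: "closure ?L = ?L" "closure ?R = {1/2..1}"
    by (simp_all add: closure_greaterThanAtMost)
  have L: "?L \<union> (closure ?L \<inter> closure ?R) = ?L" and R: "?R \<union> (closure ?L \<inter> closure ?R) = {1/2..1}"
    by (auto simp: closures)
  have half: "s = 1/2" if "s \<in> closure ?L" "s \<in> closure ?R" for s
    using that by (auto simp: closures)
  have "((\<lambda>t. if t \<in> ?L then f t else g t) has_vector_derivative
      (if t \<in> ?L then f' t else g' t)) (at t within {0..1})"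
    (is "(?h has_vector_derivative _) _")
  proof (rule has_vector_derivative_If_within_closures)
    show "t \<in> ?L \<union> ?R" "{0..1} = ?L \<union> ?R" using t by auto
    show "(f has_vector_derivative f' t) (at t within ?L \<union> (closure ?L \<inter> closure ?R))"
      if "t \<in> ?L \<union> (closure ?L \<inter> closure ?R)"
      using that unfolding L using f by blast
    show "(g has_vector_derivative g' t) (at t within ?R \<union> (closure ?L \<inter> closure ?R))"
      if "t \<in> ?R \<union> (closure ?L \<inter> closure ?R)"
      using that unfolding R using g by blast
    show "f t = g t" "f' t = g' t" if "t \<in> closure ?L" "t \<in> closure ?R"
      using fg by (simp_all add: half[OF that])
  qed
  moreover have "(if t \<in> ?L then f' t else g' t) = (if t \<le> 1/2 then f' t else g' t)"
    using t by auto
  ultimately have "(?h has_vector_derivative (if t \<le> 1/2 then f' t else g' t)) (at t within {0..1})"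
    by simp
  then show ?thesis
    by (rule has_vector_derivative_transform[OF t, rotated]) (use t in auto)
qed

lemma has_vector_derivative_smooth_join:
  fixes f g :: "real \<Rightarrow> 'a::real_normed_vector"
  assumes f: "\<And>s. s \<in> {0..1} \<Longrightarrow> (f has_vector_derivative f' s) (at s within {0..1})"
    and g: "\<And>s. s \<in> {0..1} \<Longrightarrow> (g has_vector_derivative g' s) (at s within {0..1})"
    and fg: "f 1 = g 0" and t: "t \<in> {0..1}"
  shows "(smooth_join f g has_vector_derivative smooth_join_speed t *\<^sub>R smooth_join f' g' t)
    (at t within {0..1})"
proof -
  have left: "((\<lambda>t. f (smoothstep (2 * t))) has_vector_derivative
      (24 * s * (1 - 2 * s)) *\<^sub>R f' (smoothstep (2 * s))) (at s within {0..1/2})"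
    if "s \<in> {0..1/2}" for s
  proof (rule has_vector_derivative_reparam_unit_interval[OF f _ _ that])
    show "((\<lambda>t. smoothstep (2 * t)) has_real_derivative 24 * s * (1 - 2 * s)) (at s within {0..1/2})"
      unfolding smoothstep_def
      by (auto intro!: derivative_eq_intros simp: algebra_simps power2_eq_square)
    show "(\<lambda>t. smoothstep (2 * t)) ` {0..1/2} \<subseteq> {0..1}"
      using smoothstep_in_unit_interval by auto
  qed
  have right: "((\<lambda>t. g (smoothstep (2 * t - 1))) has_vector_derivative
      (24 * (2 * s - 1) * (1 - s)) *\<^sub>R g' (smoothstep (2 * s - 1))) (at s within {1/2..1})"
    if "s \<in> {1/2..1}" for s
  proof (rule has_vector_derivative_reparam_unit_interval[OF g _ _ that])
    show "((\<lambda>t. smoothstep (2 * t - 1)) has_real_derivative 24 * (2 * s - 1) * (1 - s))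
        (at s within {1/2..1})"
      unfolding smoothstep_def
      by (auto intro!: derivative_eq_intros simp: algebra_simps power2_eq_square)
    show "(\<lambda>t. smoothstep (2 * t - 1)) ` {1/2..1} \<subseteq> {0..1}"
      using smoothstep_in_unit_interval by auto
  qed
  have "(smooth_join f g has_vector_derivative (if t \<le> 1/2
      then (24 * t * (1 - 2 * t)) *\<^sub>R f' (smoothstep (2 * t))
      else (24 * (2 * t - 1) * (1 - t)) *\<^sub>R g' (smoothstep (2 * t - 1)))) (at t within {0..1})"
    unfolding smooth_join_def
    by (rule has_vector_derivative_join_halves[OF left right _ _ t]) (simp_all add: fg)
  moreover have "(if t \<le> 1/2
      then (24 * t * (1 - 2 * t)) *\<^sub>R f' (smoothstep (2 * t))
      else (24 * (2 * t - 1) * (1 - t)) *\<^sub>R g' (smoothstep (2 * t - 1)))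
    = smooth_join_speed t *\<^sub>R smooth_join f' g' t"
    by (simp add: smooth_join_def smooth_join_speed_def)
  ultimately show ?thesis by (simp only:)
qed

lemma continuous_on_smooth_join_velocity:
  fixes f' g' :: "real \<Rightarrow> 'a::real_normed_vector"
  assumes f': "continuous_on {0..1} f'" and g': "continuous_on {0..1} g'"
  shows "continuous_on {0..1} (\<lambda>t. smooth_join_speed t *\<^sub>R smooth_join f' g' t)"
proof -
  have "(\<lambda>t. smoothstep (2 * t)) ` {0..1/2} \<subseteq> {0..1}"
    using smoothstep_in_unit_interval by auto
  then have left: "continuous_on {0..1/2} (\<lambda>t. (24 * t * (1 - 2 * t)) *\<^sub>R f' (smoothstep (2 * t)))"
    by (intro continuous_intros continuous_on_compose2[OF f'])
      (auto simp: smoothstep_def intro!: continuous_intros)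
  have "(\<lambda>t. smoothstep (2 * t - 1)) ` {1/2..1} \<subseteq> {0..1}"
    using smoothstep_in_unit_interval by auto
  then have right: "continuous_on {1/2..1}
      (\<lambda>t. (24 * (2 * t - 1) * (1 - t)) *\<^sub>R g' (smoothstep (2 * t - 1)))"
    by (intro continuous_intros continuous_on_compose2[OF g'])
      (auto simp: smoothstep_def intro!: continuous_intros)
  have "continuous_on {0..1} (\<lambda>t. if t \<le> 1/2 then (24 * t * (1 - 2 * t)) *\<^sub>R f' (smoothstep (2 * t))
      else (24 * (2 * t - 1) * (1 - t)) *\<^sub>R g' (smoothstep (2 * t - 1)))"
  proof (rule continuous_on_cases_le[where h = "\<lambda>t. t"])
    show "continuous_on {t \<in> {0..1}. t \<le> 1/2} (\<lambda>t. (24 * t * (1 - 2 * t)) *\<^sub>R f' (smoothstep (2 * t)))"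
      by (rule continuous_on_subset[OF left]) auto
    show "continuous_on {t \<in> {0..1}. 1/2 \<le> t}
        (\<lambda>t. (24 * (2 * t - 1) * (1 - t)) *\<^sub>R g' (smoothstep (2 * t - 1)))"
      by (rule continuous_on_subset[OF right]) auto
    show "(24 * t * (1 - 2 * t)) *\<^sub>R f' (smoothstep (2 * t))
        = (24 * (2 * t - 1) * (1 - t)) *\<^sub>R g' (smoothstep (2 * t - 1))" if "t = 1/2" for t
      by (simp add: that)
  qed (rule continuous_on_id)
  then show ?thesis
    by (rule continuous_on_eq) (simp add: smooth_join_def smooth_join_speed_def)
qed

lemma smooth_join_in_paths_C1:
  assumes \<alpha>: "\<alpha> \<in> paths_C1 \<Omega> x y" and \<beta>: "\<beta> \<in> paths_C1 \<Omega> y z"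
  shows "smooth_join \<alpha> \<beta> \<in> paths_C1 \<Omega> x z"
  unfolding paths_C1_def
proof (intro CollectI conjI exI ballI)
  show "continuous_on {0..1}
      (\<lambda>t. smooth_join_speed t *\<^sub>R smooth_join (velocity \<alpha>) (velocity \<beta>) t)"
    by (rule continuous_on_smooth_join_velocity[OF paths_C1D(1)[OF \<alpha>] paths_C1D(1)[OF \<beta>]])
  show "(smooth_join \<alpha> \<beta> has_vector_derivative
      smooth_join_speed t *\<^sub>R smooth_join (velocity \<alpha>) (velocity \<beta>) t) (at t within {0..1})"
    if "t \<in> {0..1}" for t
    by (rule has_vector_derivative_smooth_join[OF paths_C1D(2)[OF \<alpha>] paths_C1D(2)[OF \<beta>] _ that])
      (use paths_C1D(5)[OF \<alpha>] paths_C1D(4)[OF \<beta>] in auto)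
  show "smooth_join \<alpha> \<beta> ` {0..1} \<subseteq> \<Omega>"
    by (rule order.trans[OF smooth_join_image_subset
          Un_least[OF paths_C1D(3)[OF \<alpha>] paths_C1D(3)[OF \<beta>]]])
qed (use paths_C1D(4)[OF \<alpha>] paths_C1D(5)[OF \<beta>] in simp_all)

lemma velocity_smooth_join:
  assumes \<alpha>: "\<alpha> \<in> paths_C1 \<Omega> x y" and \<beta>: "\<beta> \<in> paths_C1 \<Omega> y z" and t: "t \<in> {0..1}"
  shows "velocity (smooth_join \<alpha> \<beta>) t
    = smooth_join_speed t *\<^sub>R smooth_join (velocity \<alpha>) (velocity \<beta>) t"
  by (rule vector_derivative_within_closed_interval[OF _ t has_vector_derivative_smooth_join
        [OF paths_C1D(2)[OF \<alpha>] paths_C1D(2)[OF \<beta>] _ t]])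
    (use paths_C1D(5)[OF \<alpha>] paths_C1D(4)[OF \<beta>] in auto)

section \<open>Parallel transport and the spaces \<open>E\<^sup>x\<close>\<close>

definition transport_matrix :: "(real^'d \<Rightarrow> real^'n^'d^'n) \<Rightarrow> real^'d \<Rightarrow> real^'d \<Rightarrow> real^'n^'n" where
  "transport_matrix B p u = (\<chi> i k. - (\<Sum>j\<in>UNIV. B p $ i $ j $ k * u $ j))"

lemma transport_matrix_scaleR: "transport_matrix B p (a *\<^sub>R u) = a *\<^sub>R transport_matrix B p u"
  unfolding transport_matrix_def by (simp add: vec_eq_iff sum_distrib_left ac_simps)

lemma transport_matrix_vector_mult:
  "transport_matrix B p u *v w = (\<chi> i. - (\<Sum>j\<in>UNIV. \<Sum>k\<in>UNIV. B p $ i $ j $ k * w $ k * u $ j))"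
proof -
  have "(\<Sum>k\<in>UNIV. - (\<Sum>j\<in>UNIV. B p $ i $ j $ k * u $ j) * w $ k)
      = - (\<Sum>j\<in>UNIV. \<Sum>k\<in>UNIV. B p $ i $ j $ k * w $ k * u $ j)" for i
    by (simp add: sum_distrib_left sum_distrib_right sum_negf ac_simps) (rule sum.swap)
  then show ?thesis
    unfolding transport_matrix_def matrix_vector_mult_def by (simp add: vec_eq_iff)
qed

lemma transport_ode_iff:
  "transport_ode B \<gamma> v \<phi> \<longleftrightarrow>
     \<phi> 0 = v \<and> solves_linear_ode (\<lambda>t. transport_matrix B (\<gamma> t) (velocity \<gamma> t)) \<phi>"
  unfolding transport_ode_def solves_linear_ode_def transport_matrix_vector_mult ..

lemma transport_eq_linear_ode_propagator:
  "transport B \<gamma> = linear_ode_propagator (\<lambda>t. transport_matrix B (\<gamma> t) (velocity \<gamma> t))"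
  unfolding transport_def linear_ode_propagator_def transport_ode_iff by (simp add: fun_eq_iff)

lemma continuous_on_transport_matrix:
  assumes B: "continuous_on (closure \<Omega>) B" and \<gamma>: "\<gamma> \<in> paths_C1 \<Omega> x y"
  shows "continuous_on {0..1} (\<lambda>t. transport_matrix B (\<gamma> t) (velocity \<gamma> t))"
proof -
  have "\<gamma> ` {0..1} \<subseteq> closure \<Omega>"
    using paths_C1D(3)[OF \<gamma>] closure_subset by blast
  then have B\<gamma>: "continuous_on {0..1} (\<lambda>t. B (\<gamma> t))"
    by (rule continuous_on_compose2[OF B continuous_on_paths_C1[OF \<gamma>]])
  show ?thesis
    unfolding transport_matrix_def
    by (intro continuous_on_vec_lambda continuous_on_minus continuous_on_sum continuous_on_mult
        continuous_on_component B\<gamma> paths_C1D(1)[OF \<gamma>])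
qed

lemma linear_transport:
  "continuous_on (closure \<Omega>) B \<Longrightarrow> \<gamma> \<in> paths_C1 \<Omega> x y \<Longrightarrow> linear (transport B \<gamma>)"
  unfolding transport_eq_linear_ode_propagator
  by (intro linear_linear_ode_propagator continuous_on_transport_matrix)

lemma inj_transport:
  "continuous_on (closure \<Omega>) B \<Longrightarrow> \<gamma> \<in> paths_C1 \<Omega> x y \<Longrightarrow> inj (transport B \<gamma>)"
  unfolding transport_eq_linear_ode_propagator
  by (intro inj_linear_ode_propagator continuous_on_transport_matrix)

lemma transport_eqI:
  "continuous_on (closure \<Omega>) B \<Longrightarrow> \<gamma> \<in> paths_C1 \<Omega> x y \<Longrightarrow> transport_ode B \<gamma> v \<phi> \<Longrightarrow>
    transport B \<gamma> v = \<phi> 1"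
  unfolding transport_eq_linear_ode_propagator transport_ode_iff
  by (blast intro: linear_ode_propagator_eq continuous_on_transport_matrix)

lemma transport_ode_exists:
  assumes "continuous_on (closure \<Omega>) B" "\<gamma> \<in> paths_C1 \<Omega> x y"
  obtains \<phi> where "transport_ode B \<gamma> v \<phi>"
  using linear_ode_exists[OF continuous_on_transport_matrix[OF assms]]
  unfolding transport_ode_iff by metis

text \<open>The velocity of the join carries the factor \<^const>\<open>smooth_join_speed\<close>, and
  \<^const>\<open>transport_matrix\<close> is linear in the velocity; so the join of the two transported
  solutions solves the transport equation along the join.\<close>
lemma transport_smooth_join:
  assumes B: "continuous_on (closure \<Omega>) B"
    and \<alpha>: "\<alpha> \<in> paths_C1 \<Omega> x y" and \<beta>: "\<beta> \<in> paths_C1 \<Omega> y z"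
  shows "transport B (smooth_join \<alpha> \<beta>) v = transport B \<beta> (transport B \<alpha> v)"
proof -
  let ?A\<alpha> = "\<lambda>t. transport_matrix B (\<alpha> t) (velocity \<alpha> t)"
  let ?A\<beta> = "\<lambda>t. transport_matrix B (\<beta> t) (velocity \<beta> t)"
  obtain \<phi> where \<phi>: "transport_ode B \<alpha> v \<phi>"
    using transport_ode_exists[OF B \<alpha>] .
  obtain \<psi> where \<psi>: "transport_ode B \<beta> (\<phi> 1) \<psi>"
    using transport_ode_exists[OF B \<beta>] .
  have "transport_ode B (smooth_join \<alpha> \<beta>) v (smooth_join \<phi> \<psi>)"
    unfolding transport_ode_iff solves_linear_ode_def
  proof (intro conjI ballI)
    show "smooth_join \<phi> \<psi> 0 = v" using \<phi> by (simp add: transport_ode_iff)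
    fix t :: real assume t: "t \<in> {0..1}"
    have "(smooth_join \<phi> \<psi> has_vector_derivative smooth_join_speed t *\<^sub>R
        smooth_join (\<lambda>s. ?A\<alpha> s *v \<phi> s) (\<lambda>s. ?A\<beta> s *v \<psi> s) t) (at t within {0..1})"
      using \<phi> \<psi> t unfolding transport_ode_iff solves_linear_ode_def
      by (intro has_vector_derivative_smooth_join) auto
    also have "smooth_join_speed t *\<^sub>R smooth_join (\<lambda>s. ?A\<alpha> s *v \<phi> s) (\<lambda>s. ?A\<beta> s *v \<psi> s) t
        = transport_matrix B (smooth_join \<alpha> \<beta> t) (velocity (smooth_join \<alpha> \<beta>) t) *v smooth_join \<phi> \<psi> t"
      using t by (auto simp: velocity_smooth_join[OF \<alpha> \<beta> t] transport_matrix_scaleR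
          scaleR_matrix_vector_assoc smooth_join_def)
    finally show "(smooth_join \<phi> \<psi> has_vector_derivative
        transport_matrix B (smooth_join \<alpha> \<beta> t) (velocity (smooth_join \<alpha> \<beta>) t) *v smooth_join \<phi> \<psi> t)
        (at t within {0..1})" .
  qed
  then have "transport B (smooth_join \<alpha> \<beta>) v = \<psi> 1"
    using transport_eqI[OF B smooth_join_in_paths_C1[OF \<alpha> \<beta>]] by simp
  also have "\<dots> = transport B \<beta> (\<phi> 1)"
    using transport_eqI[OF B \<beta> \<psi>] by simp
  also have "\<phi> 1 = transport B \<alpha> v"
    using transport_eqI[OF B \<alpha> \<phi>] by simp
  finally show ?thesis .
qed

lemma transport_image_E_B_subset:
  assumes B: "continuous_on (closure \<Omega>) B" and \<sigma>: "\<sigma> \<in> paths_C1 \<Omega> x y"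
  shows "transport B \<sigma> ` E_B \<Omega> B x \<subseteq> E_B \<Omega> B y"
proof (rule image_subsetI)
  fix v assume v: "v \<in> E_B \<Omega> B x"
  show "transport B \<sigma> v \<in> E_B \<Omega> B y"
    unfolding E_B_def
  proof (intro CollectI ballI)
    fix z \<gamma>\<^sub>1 \<gamma>\<^sub>2 assume "z \<in> \<Omega>" "\<gamma>\<^sub>1 \<in> paths_C1 \<Omega> y z" "\<gamma>\<^sub>2 \<in> paths_C1 \<Omega> y z"
    with v \<sigma> have "transport B (smooth_join \<sigma> \<gamma>\<^sub>1) v = transport B (smooth_join \<sigma> \<gamma>\<^sub>2) v"
      unfolding E_B_def by (blast intro: smooth_join_in_paths_C1)
    with B \<sigma> \<open>\<gamma>\<^sub>1 \<in> _\<close> \<open>\<gamma>\<^sub>2 \<in> _\<close>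
    show "transport B \<gamma>\<^sub>1 (transport B \<sigma> v) = transport B \<gamma>\<^sub>2 (transport B \<sigma> v)"
      by (simp add: transport_smooth_join)
  qed
qed

lemma dim_E_B_le:
  assumes B: "continuous_on (closure \<Omega>) B" and \<sigma>: "\<sigma> \<in> paths_C1 \<Omega> x y"
  shows "dim (E_B \<Omega> B x) \<le> dim (E_B \<Omega> B y)"
proof -
  have "dim (E_B \<Omega> B x) = dim (transport B \<sigma> ` E_B \<Omega> B x)"
    using linear_transport[OF B \<sigma>] inj_transport[OF B \<sigma>]
    by (metis dim_image_eq inj_on_subset subset_UNIV)
  also have "\<dots> \<le> dim (E_B \<Omega> B y)"
    by (rule dim_subset[OF transport_image_E_B_subset[OF B \<sigma>]])
  finally show ?thesis .
qed

lemma dim_E_B_eq_if_closed_segment_subset: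
  assumes "continuous_on (closure \<Omega>) B" "closed_segment x y \<subseteq> \<Omega>"
  shows "dim (E_B \<Omega> B x) = dim (E_B \<Omega> B y)"
  using dim_E_B_le[OF assms(1) linepath_in_paths_C1] assms(2) closed_segment_commute
  by (metis order.antisym)

theorem proposition4p6:
  fixes \<Omega> :: "(real^'d) set" and B :: "real^'d \<Rightarrow> real^'n^'d^'n"
  assumes "bounded \<Omega>" "connected \<Omega>" "open \<Omega>" "smooth_boundary \<Omega>"
    and "continuous_on (closure \<Omega>) B"
    and "x1 \<in> \<Omega>" "x2 \<in> \<Omega>"
  shows "dim (E_B \<Omega> B x1) = dim (E_B \<Omega> B x2)"
proof -
  have "\<exists>T. openin (top_of_set \<Omega>) T \<and> a \<in> T \<and> (\<forall>y\<in>T. dim (E_B \<Omega> B y) = dim (E_B \<Omega> B a))"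
    if a: "a \<in> \<Omega>" for a
  proof -
    obtain r where r: "r > 0" "ball a r \<subseteq> \<Omega>"
      using \<open>open \<Omega>\<close> a open_contains_ball by blast
    show ?thesis
    proof (intro exI conjI ballI)
      show "openin (top_of_set \<Omega>) (ball a r)" by (rule open_subset[OF r(2) open_ball])
      show "a \<in> ball a r" using r(1) by simp
      fix y assume "y \<in> ball a r"
      with r have "closed_segment a y \<subseteq> \<Omega>"
        by (meson centre_in_ball closed_segment_subset convex_ball order_trans)
      then show "dim (E_B \<Omega> B y) = dim (E_B \<Omega> B a)"
        by (rule sym[OF dim_E_B_eq_if_closed_segment_subset[OF assms(5)]])
    qed
  qed
  then have "(\<lambda>y. dim (E_B \<Omega> B y)) constant_on \<Omega>"
    using \<open>connected \<Omega>\<close> by (rule locally_constant_imp_constant[rotated])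
  then show ?thesis
    using assms(6,7) by (auto simp: constant_on_def)
qed

end
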